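(* Let $p(z)=z^n+a_nz^{n-1}+\cdots+a_2z+a_1$ be a complex monic polynomial with $n\geq2$ and $a_1\neq0$. If $z\in\mathbb{C}$ is any zero of $p$, then $$|z|\leq\left\{\frac{1}{4}\left(\frac{\delta+1+\sqrt{(\delta-1)^2+4\delta'}}{2}\right)+\frac{3}{4}\left(\frac{1}{2}\left(\delta_1+\delta+\sqrt{(\delta_1-\delta)^2+4\delta_2}\right)+1\right)^{1/2}\right\}^{1/4}.$$
   Context: Let $C_p$ be the $n\times n$ matrix whose first row is $(-a_n,-a_{n-1},\dots,-a_2,-a_1)$, whose entries $(k+1,k)$ equal $1$ for $k=1,\dots,n-1$, and whose other entries are $0$. Define numbers $b_j,c_j,d_j$ ($j=1,\dots,n$) by: the first row of $C_p^2$ is $(b_n,b_{n-1},\dots,b_1)$, the first row of $C_p^3$ is $(c_n,\dots,c_1)$, the first row of $C_p^4$ is $(d_n,\dots,d_1)$ (so $b_j=a_na_j-a_{j-1}$, $c_j=-a_nb_j+a_{n-1}a_j-a_{j-2}$ with $a_0=a_{-1}=0$). Set $\alpha=\sum_{j=1}^n|a_j|^2$, $\beta=\sum_{j=1}^n|b_j|^2$, $\gamma=-\sum_{j=1}^n b_j\overline{a_j}$, $\delta=\frac{1}{2}\left(\alpha+\beta+\sqrt{(\alpha-\beta)^2+4|\gamma|^2}\right)$; $\alpha'=\sum_{j=3}^n|a_j|^2$, $\beta'=\sum_{j=3}^n|b_j|^2$, $\gamma'=-\sum_{j=3}^n\overline{a_j}b_j$, $\delta'=\frac12\left(\alpha'+\beta'+\sqrt{(\alpha'-\beta')^2+4|\gamma'|^2}\right)$;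 $\alpha_1=\sum_{j=1}^n|d_j|^2$, $\beta_1=\sum_{j=1}^n|c_j|^2$, $\gamma_1=\sum_{j=1}^n d_j\overline{c_j}$, $\delta_1=\frac12\left(\alpha_1+\beta_1+\sqrt{(\alpha_1-\beta_1)^2+4|\gamma_1|^2}\right)$; $\gamma_2=\sum_{j=1}^n d_j\overline{b_j}$, $\gamma_3=\sum_{j=1}^n d_j\overline{a_j}$, $\gamma_4=\sum_{j=1}^n c_j\overline{b_j}$, $\gamma_5=\sum_{j=1}^n c_j\overline{a_j}$, and $\delta_2=\frac12\Big(|\gamma_2|^2+|\gamma_3|^2+|\gamma_4|^2+|\gamma_5|^2+\sqrt{\big((|\gamma_2|^2+|\gamma_3|^2)-(|\gamma_4|^2+|\gamma_5|^2)\big)^2+4|\gamma_2\overline{\gamma_4}+\gamma_3\overline{\gamma_5}|^2}\Big)$. *)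

theory Defs
  imports Complex_Main
begin

text \<open>Matrices are represented as functions on indices 1..n (rows and columns).\<close>

definition companion :: "nat \<Rightarrow> (nat \<Rightarrow> complex) \<Rightarrow> nat \<Rightarrow> nat \<Rightarrow> complex" where
  "companion n a i j = (if i = 1 then - a (n + 1 - j) else if i = j + 1 then 1 else 0)"

definition mmult :: "nat \<Rightarrow> (nat \<Rightarrow> nat \<Rightarrow> complex) \<Rightarrow> (nat \<Rightarrow> nat \<Rightarrow> complex) \<Rightarrow> nat \<Rightarrow> nat \<Rightarrow> complex" where
  "mmult n A B i j = (\<Sum>k=1..n. A i k * B k j)"

fun mpow :: "nat \<Rightarrow> (nat \<Rightarrow> nat \<Rightarrow> complex) \<Rightarrow> nat \<Rightarrow> nat \<Rightarrow> nat \<Rightarrow> complex" where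
  "mpow n A 0 = (\<lambda>i j. if i = j then 1 else 0)"
| "mpow n A (Suc k) = mmult n (mpow n A k) A"

text \<open>Coefficient j (1 \<le> j \<le> n) read off from the first row (row 1, column n+1-j) of C_p^k;
  so the first row of C_p^k is (x_n, ..., x_1).\<close>
definition rowcoef :: "nat \<Rightarrow> (nat \<Rightarrow> complex) \<Rightarrow> nat \<Rightarrow> nat \<Rightarrow> complex" where
  "rowcoef n a k j = mpow n (companion n a) k 1 (n + 1 - j)"

definition bco where "bco n a = rowcoef n a 2"
definition cco where "cco n a = rowcoef n a 3"
definition dco where "dco n a = rowcoef n a 4"

definition lam :: "real \<Rightarrow> real \<Rightarrow> real \<Rightarrow> real" where
  "lam x y g = (x + y + sqrt ((x - y)^2 + 4 * g)) / 2"

definition delta :: "nat \<Rightarrow> (nat \<Rightarrow> complex) \<Rightarrow> real" where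
  "delta n a = lam (\<Sum>j=1..n. (cmod (a j))^2) (\<Sum>j=1..n. (cmod (bco n a j))^2)
                   ((cmod (- (\<Sum>j=1..n. bco n a j * cnj (a j))))^2)"

definition delta' :: "nat \<Rightarrow> (nat \<Rightarrow> complex) \<Rightarrow> real" where
  "delta' n a = lam (\<Sum>j=3..n. (cmod (a j))^2) (\<Sum>j=3..n. (cmod (bco n a j))^2)
                   ((cmod (- (\<Sum>j=3..n. cnj (a j) * bco n a j)))^2)"

definition delta1 :: "nat \<Rightarrow> (nat \<Rightarrow> complex) \<Rightarrow> real" where
  "delta1 n a = lam (\<Sum>j=1..n. (cmod (dco n a j))^2) (\<Sum>j=1..n. (cmod (cco n a j))^2)
                   ((cmod (\<Sum>j=1..n. dco n a j * cnj (cco n a j)))^2)"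

definition delta2 :: "nat \<Rightarrow> (nat \<Rightarrow> complex) \<Rightarrow> real" where
  "delta2 n a = (let
     g2 = (\<Sum>j=1..n. dco n a j * cnj (bco n a j));
     g3 = (\<Sum>j=1..n. dco n a j * cnj (a j));
     g4 = (\<Sum>j=1..n. cco n a j * cnj (bco n a j));
     g5 = (\<Sum>j=1..n. cco n a j * cnj (a j))
   in lam ((cmod g2)^2 + (cmod g3)^2) ((cmod g4)^2 + (cmod g5)^2)
          ((cmod (g2 * cnj g4 + g3 * cnj g5))^2))"

end

theory Submission
  imports Defs "HOL-Analysis.L2_Norm"
begin

text \<open>If \<open>p z = 0\<close>, the partial Horner sums \<open>x = (1, z + a\<^sub>n, \<dots>)\<close> satisfy
  \<open>x C\<^sub>p\<^sup>k = z\<^sup>k x\<close>. Rows \<open>1..k\<close> of \<open>C\<^sub>p\<^sup>k\<close> are the first rows of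
  \<open>C\<^sub>p\<^sup>k, \<dots>, C\<^sub>p\<close> and the other rows are unit vectors, so \<open>z\<^sup>k x\<close> is the
  combination of the first-row vectors \<open>d, c, b, -a\<close> with weights \<open>x\<^sub>1, \<dots>, x\<^sub>k\<close>
  plus a shifted copy of \<open>x\<close>. Each quantity \<open>\<delta>, \<delta>', \<delta>\<^sub>1, \<delta>\<^sub>2\<close> is the largest
  eigenvalue of a \<open>2 \<times> 2\<close> Gram-type matrix, which bounds the combination; comparing
  norms gives \<open>\<bar>z\<bar>\<^sup>4 \<le> lam \<delta> 1 \<delta>'\<close> for \<open>k = 2\<close> and
  \<open>\<bar>z\<bar>\<^sup>8 \<le> lam \<delta>\<^sub>1 \<delta> \<delta>\<^sub>2 + 1\<close> for \<open>k = 4\<close>, and the theorem is a convex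
  combination of the two.\<close>

lemma lam_nonneg: "0 \<le> x \<Longrightarrow> 0 \<le> y \<Longrightarrow> 0 \<le> g \<Longrightarrow> 0 \<le> lam x y g"
  unfolding lam_def by simp

lemma lam_commute: "lam x y g = lam y x g"
  unfolding lam_def by (simp add: power2_commute add.commute)

lemma lam_self_one:
  assumes "0 \<le> g"
  shows "lam g 1 g = g + 1"
proof -
  have "(g - 1)^2 + 4 * g = (g + 1)^2" by (simp add: power2_eq_square algebra_simps)
  then show ?thesis using assms unfolding lam_def by simp
qed

text \<open>\<open>lam \<alpha> \<beta> g\<close> is the larger eigenvalue of the symmetric matrix with rows
  \<open>(\<alpha>, sqrt g)\<close> and \<open>(sqrt g, \<beta>)\<close>; the two shifts \<open>p = lam - \<alpha>\<close> and
  \<open>q = lam - \<beta>\<close> are nonnegative with \<open>p * q = g\<close>.\<close>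

lemma lam_quadratic_form_le:
  fixes \<alpha> \<beta> g s t :: real
  assumes "0 \<le> g"
  shows "\<alpha> * s^2 + \<beta> * t^2 + 2 * sqrt g * s * t \<le> lam \<alpha> \<beta> g * (s^2 + t^2)"
proof -
  define r where "r = sqrt ((\<alpha> - \<beta>)^2 + 4 * g)"
  define p where "p = lam \<alpha> \<beta> g - \<alpha>"
  define q where "q = lam \<alpha> \<beta> g - \<beta>"
  have r_sq: "r^2 = (\<alpha> - \<beta>)^2 + 4 * g" unfolding r_def using assms by simp
  have "sqrt ((\<alpha> - \<beta>)^2) \<le> r" unfolding r_def using assms by (intro real_sqrt_le_mono) simp
  then have r_ge: "\<bar>\<alpha> - \<beta>\<bar> \<le> r" by simp
  have p_eq: "p = (\<beta> - \<alpha> + r) / 2" and q_eq: "q = (\<alpha> - \<beta> + r) / 2"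
    unfolding p_def q_def lam_def r_def by (simp_all add: field_simps)
  have pq_nonneg: "0 \<le> p" "0 \<le> q" unfolding p_eq q_eq using r_ge by auto
  have "p * q = g" unfolding p_eq q_eq using r_sq by (simp add: field_simps power2_eq_square)
  then have sqrt_g: "sqrt g = sqrt p * sqrt q" by (metis real_sqrt_mult)
  have "0 \<le> (sqrt p * s - sqrt q * t)^2" by simp
  then have "2 * sqrt g * s * t \<le> p * s^2 + q * t^2"
    using pq_nonneg sqrt_g by (simp add: power2_eq_square algebra_simps)
  then show ?thesis unfolding p_def q_def by (simp add: algebra_simps)
qed

lemma sum_cmod_sq_add:
  "(\<Sum>j\<in>S. (cmod (f j + g j))^2) =
     (\<Sum>j\<in>S. (cmod (f j))^2) + (\<Sum>j\<in>S. (cmod (g j))^2) + 2 * Re (\<Sum>j\<in>S. f j * cnj (g j))"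
proof -
  have "(cmod (f j + g j))^2 = (cmod (f j))^2 + (cmod (g j))^2 + 2 * Re (f j * cnj (g j))" for j
    unfolding cmod_power2 by (simp add: power2_eq_square algebra_simps)
  then show ?thesis by (simp add: sum.distrib sum_distrib_left Re_sum)
qed

lemma cmod_sum_mult_cnj_le:
  "cmod (\<Sum>j\<in>S. f j * cnj (g j)) \<le> sqrt (\<Sum>j\<in>S. (cmod (f j))^2) * sqrt (\<Sum>j\<in>S. (cmod (g j))^2)"
proof -
  have "cmod (\<Sum>j\<in>S. f j * cnj (g j)) \<le> (\<Sum>j\<in>S. \<bar>cmod (f j)\<bar> * \<bar>cmod (g j)\<bar>)"
    by (rule order_trans[OF norm_sum]) (simp add: norm_mult)
  also have "\<dots> \<le> L2_set (\<lambda>j. cmod (f j)) S * L2_set (\<lambda>j. cmod (g j)) S"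
    by (rule L2_set_mult_ineq)
  finally show ?thesis unfolding L2_set_def by simp
qed

lemma sum_cmod_sq_add_le_lam:
  assumes "(\<Sum>j\<in>S. (cmod (f j))^2) \<le> \<alpha> * P" "(\<Sum>j\<in>S. (cmod (g j))^2) \<le> \<beta> * Q"
    and "cmod (\<Sum>j\<in>S. f j * cnj (g j)) \<le> sqrt \<gamma> * sqrt P * sqrt Q"
    and "0 \<le> P" "0 \<le> Q" "0 \<le> \<gamma>"
  shows "(\<Sum>j\<in>S. (cmod (f j + g j))^2) \<le> lam \<alpha> \<beta> \<gamma> * (P + Q)"
proof -
  have "Re (\<Sum>j\<in>S. f j * cnj (g j)) \<le> sqrt \<gamma> * sqrt P * sqrt Q"
    using complex_Re_le_cmod assms(3) by (rule order_trans)
  then have "(\<Sum>j\<in>S. (cmod (f j + g j))^2) \<le> \<alpha> * (sqrt P)^2 + \<beta> * (sqrt Q)^2 + 2 * sqrt \<gamma> * sqrt P * sqrt Q"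
    using assms(1,2,4,5) unfolding sum_cmod_sq_add by simp
  also have "\<dots> \<le> lam \<alpha> \<beta> \<gamma> * ((sqrt P)^2 + (sqrt Q)^2)"
    using assms(6) by (rule lam_quadratic_form_le)
  finally show ?thesis using assms(4,5) by simp
qed

lemma sum_cmod_sq_lincomb_le_lam:
  "(\<Sum>j\<in>S. (cmod (u * f j + w * g j))^2) \<le>
     lam (\<Sum>j\<in>S. (cmod (f j))^2) (\<Sum>j\<in>S. (cmod (g j))^2) ((cmod (\<Sum>j\<in>S. f j * cnj (g j)))^2)
       * ((cmod u)^2 + (cmod w)^2)"
proof (rule sum_cmod_sq_add_le_lam)
  show "(\<Sum>j\<in>S. (cmod (u * f j))^2) \<le> (\<Sum>j\<in>S. (cmod (f j))^2) * (cmod u)^2"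
    unfolding sum_distrib_right by (simp add: norm_mult power_mult_distrib mult.commute)
  show "(\<Sum>j\<in>S. (cmod (w * g j))^2) \<le> (\<Sum>j\<in>S. (cmod (g j))^2) * (cmod w)^2"
    unfolding sum_distrib_right by (simp add: norm_mult power_mult_distrib mult.commute)
  have "(\<Sum>j\<in>S. u * f j * cnj (w * g j)) = u * cnj w * (\<Sum>j\<in>S. f j * cnj (g j))"
    by (simp add: sum_distrib_left mult_ac)
  then show "cmod (\<Sum>j\<in>S. u * f j * cnj (w * g j))
      \<le> sqrt ((cmod (\<Sum>j\<in>S. f j * cnj (g j)))^2) * sqrt ((cmod u)^2) * sqrt ((cmod w)^2)"
    by (simp add: norm_mult)
qed simp_all

lemma sum_atLeastAtMost_1_2: "(\<Sum>i=1..2. h i) = h 1 + h (2::nat)"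
  by (simp add: numeral_2_eq_2)

lemma sum_atLeastAtMost_1_4: "(\<Sum>i=1..4. h i) = h 1 + h 2 + h 3 + h (4::nat)"
proof -
  have "{1..4::nat} = {1, 2, 3, 4}" by auto
  then show ?thesis by (simp add: add_ac)
qed

lemma companion_pow_Suc_row:
  assumes "2 \<le> i" "i \<le> n"
  shows "mpow n (companion n a) (Suc k) i j = mpow n (companion n a) k (i - 1) j"
proof (induction k arbitrary: j)
  case 0
  have "mpow n (companion n a) (Suc 0) i j = companion n a i j"
    using assms by (simp add: mmult_def of_bool_def[symmetric])
  also have "\<dots> = mpow n (companion n a) 0 (i - 1) j"
    using assms by (auto simp: companion_def)
  finally show ?case .
next
  case (Suc k)
  then show ?case by (simp add: mmult_def)
qed

lemma companion_pow_row:
  assumes "1 \<le> i" "i \<le> n"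
  shows "mpow n (companion n a) k i j =
    (if i \<le> k then mpow n (companion n a) (k + 1 - i) 1 j else if i - k = j then 1 else 0)"
  using assms
proof (induction k arbitrary: i)
  case 0
  then show ?case by auto
next
  case (Suc k)
  show ?case
  proof (cases "i = 1")
    case False
    then have "mpow n (companion n a) (Suc k) i j = mpow n (companion n a) k (i - 1) j"
      using Suc.prems by (intro companion_pow_Suc_row) auto
    then show ?thesis using Suc.IH[of "i - 1"] Suc.prems False by (auto simp: Suc_diff_le)
  qed simp
qed

lemma rowcoef_1:
  assumes "1 \<le> j" "j \<le> n"
  shows "rowcoef n a 1 j = - a j"
  using assms by (simp add: rowcoef_def mmult_def of_bool_def[symmetric] companion_def)

definition horner_tail :: "nat \<Rightarrow> (nat \<Rightarrow> complex) \<Rightarrow> complex \<Rightarrow> nat \<Rightarrow> complex" where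
  "horner_tail n a z j = z ^ (n - j) + (\<Sum>k=j+1..n. a k * z ^ (k - 1 - j))"

definition companion_eigvec :: "nat \<Rightarrow> (nat \<Rightarrow> complex) \<Rightarrow> complex \<Rightarrow> nat \<Rightarrow> complex" where
  "companion_eigvec n a z i = horner_tail n a z (n + 1 - i)"

lemma horner_tail_step:
  assumes "1 \<le> j" "j \<le> n"
  shows "horner_tail n a z (j - 1) = z * horner_tail n a z j + a j"
proof -
  have "z * (a k * z ^ (k - 1 - j)) = a k * z ^ (k - j)" if "Suc j \<le> k" for k
  proof -
    have "k - j = Suc (k - 1 - j)" using that by simp
    then show ?thesis by simp
  qed
  then have "z * (\<Sum>k=j+1..n. a k * z ^ (k - 1 - j)) = (\<Sum>k=Suc j..n. a k * z ^ (k - j))"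
    unfolding sum_distrib_left by (intro sum.cong) auto
  moreover have "(\<Sum>k=j..n. a k * z ^ (k - j)) = a j + (\<Sum>k=Suc j..n. a k * z ^ (k - j))"
    using assms by (simp add: sum.atLeast_Suc_atMost)
  moreover have "n - (j - 1) = Suc (n - j)" using assms by auto
  ultimately show ?thesis using assms unfolding horner_tail_def by (simp add: algebra_simps)
qed

lemma horner_tail_0:
  assumes "z ^ n + (\<Sum>j=1..n. a j * z ^ (j - 1)) = 0"
  shows "horner_tail n a z 0 = 0"
  using assms unfolding horner_tail_def by simp

lemma companion_eigvec_1: "companion_eigvec n a z 1 = 1"
  unfolding companion_eigvec_def horner_tail_def by simp

lemma companion_eigvec_eq_0:
  assumes "z ^ n + (\<Sum>j=1..n. a j * z ^ (j - 1)) = 0" "n < i"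
  shows "companion_eigvec n a z i = 0"
  using assms horner_tail_0[OF assms(1)] unfolding companion_eigvec_def by simp

lemma companion_eigvec_left_eigen:
  assumes root: "z ^ n + (\<Sum>j=1..n. a j * z ^ (j - 1)) = 0" and "1 \<le> l" "l \<le> n"
  shows "(\<Sum>i=1..n. companion_eigvec n a z i * companion n a i l) = z * companion_eigvec n a z l"
proof -
  let ?x = "companion_eigvec n a z"
  have "(\<Sum>i=1..n. ?x i * companion n a i l) = ?x 1 * companion n a 1 l + (\<Sum>i=Suc 1..n. ?x i * companion n a i l)"
    using assms by (simp add: sum.atLeast_Suc_atMost)
  also have "(\<Sum>i=Suc 1..n. ?x i * companion n a i l) = (\<Sum>i=Suc 1..n. if i = l + 1 then ?x i else 0)"
    by (rule sum.cong) (auto simp: companion_def)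
  finally have "(\<Sum>i=1..n. ?x i * companion n a i l) = - a (n + 1 - l) + ?x (l + 1)"
    using assms companion_eigvec_eq_0[OF root, of "l + 1"]
    unfolding companion_eigvec_1 by (simp add: companion_def)
  also have "?x (l + 1) = z * ?x l + a (n + 1 - l)"
    using assms horner_tail_step[of "n + 1 - l" n a z] unfolding companion_eigvec_def
    by (cases "l = n") (auto simp: horner_tail_0[OF root])
  finally show ?thesis by simp
qed

lemma companion_eigvec_left_eigen_pow:
  assumes root: "z ^ n + (\<Sum>j=1..n. a j * z ^ (j - 1)) = 0" and "1 \<le> l" "l \<le> n"
  shows "(\<Sum>i=1..n. companion_eigvec n a z i * mpow n (companion n a) k i l) = z ^ k * companion_eigvec n a z l"
  using assms(2,3)
proof (induction k arbitrary: l)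
  case 0
  then show ?case by (simp add: of_bool_def[symmetric])
next
  case (Suc k)
  let ?x = "companion_eigvec n a z"
  have "(\<Sum>i=1..n. ?x i * mpow n (companion n a) (Suc k) i l)
      = (\<Sum>i=1..n. \<Sum>m=1..n. ?x i * mpow n (companion n a) k i m * companion n a m l)"
    by (simp add: mmult_def sum_distrib_left mult.assoc)
  also have "\<dots> = (\<Sum>m=1..n. (\<Sum>i=1..n. ?x i * mpow n (companion n a) k i m) * companion n a m l)"
    by (subst sum.swap) (simp add: sum_distrib_right)
  also have "\<dots> = z ^ k * (\<Sum>m=1..n. ?x m * companion n a m l)"
    using Suc.IH by (simp add: sum_distrib_left mult.assoc)
  finally show ?case using companion_eigvec_left_eigen[OF root Suc.prems] by simp
qed

text \<open>Coordinate \<open>n + 1 - j\<close> of \<open>x C\<^sub>p\<^sup>k = z\<^sup>k x\<close>, written with the first rows of the powers of \<open>C\<^sub>p\<close>.\<close>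

lemma companion_eigvec_pow_coord:
  assumes root: "z ^ n + (\<Sum>j=1..n. a j * z ^ (j - 1)) = 0" and j: "1 \<le> j" "j \<le> n"
  defines "x \<equiv> companion_eigvec n a z"
  shows "z ^ k * x (n + 1 - j) = (\<Sum>i=1..k. x i * rowcoef n a (k + 1 - i) j) + x (n + 1 + k - j)"
proof -
  define R where "R i = (if i \<le> k then rowcoef n a (k + 1 - i) j else if i - k = n + 1 - j then 1 else 0)" for i
  have "z ^ k * x (n + 1 - j) = (\<Sum>i=1..n. x i * mpow n (companion n a) k i (n + 1 - j))"
    using companion_eigvec_left_eigen_pow[OF root, of "n + 1 - j" k] j by (simp add: x_def)
  also have "\<dots> = (\<Sum>i=1..n. x i * R i)"
    using j by (intro sum.cong) (auto simp: companion_pow_row R_def rowcoef_def)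
  also have "\<dots> = (\<Sum>i=1..n + k. x i * R i)"
    using companion_eigvec_eq_0[OF root] sum.ub_add_nat[of 1 n "\<lambda>i. x i * R i" k]
    unfolding x_def by simp
  also have "\<dots> = (\<Sum>i=1..k. x i * R i) + (\<Sum>i=k+1..k+n. x i * R i)"
    using sum.ub_add_nat[of 1 k "\<lambda>i. x i * R i" n] by (simp add: add.commute)
  also have "(\<Sum>i=k+1..k+n. x i * R i) = (\<Sum>i=k+1..k+n. if i = n + 1 + k - j then x i else 0)"
    using j by (intro sum.cong) (auto simp: R_def)
  also have "\<dots> = x (n + 1 + k - j)"
    using j by auto
  finally show ?thesis by (simp add: R_def)
qed

lemma companion_eigvec_norm_split:
  assumes root: "z ^ n + (\<Sum>j=1..n. a j * z ^ (j - 1)) = 0"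
  defines "x \<equiv> companion_eigvec n a z"
  shows "(\<Sum>i=1..n. (cmod (x i))^2) = (\<Sum>i=1..k. (cmod (x i))^2) + (\<Sum>j=1..n. (cmod (x (n + 1 + k - j)))^2)"
proof -
  have "(\<Sum>i=1..n. (cmod (x i))^2) = (\<Sum>i=1..k+n. (cmod (x i))^2)"
    using companion_eigvec_eq_0[OF root] sum.ub_add_nat[of 1 n "\<lambda>i. (cmod (x i))^2" k]
    unfolding x_def by (simp add: add.commute)
  also have "\<dots> = (\<Sum>i=1..k. (cmod (x i))^2) + (\<Sum>i=k+1..k+n. (cmod (x i))^2)"
    by (rule sum.ub_add_nat) simp
  also have "(\<Sum>i=k+1..k+n. (cmod (x i))^2) = (\<Sum>j=1..n. (cmod (x (n + 1 + k - j)))^2)"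
    by (rule sum.reindex_bij_witness[of _ "\<lambda>j. n + 1 + k - j" "\<lambda>i. n + 1 + k - i"]) auto
  finally show ?thesis .
qed

lemma cmod_root_pow_le:
  assumes root: "z ^ n + (\<Sum>j=1..n. a j * z ^ (j - 1)) = 0"
  defines "x \<equiv> companion_eigvec n a z"
  assumes bound: "(\<Sum>j=1..n. (cmod ((\<Sum>i=1..k. x i * rowcoef n a (k + 1 - i) j) + x (n + 1 + k - j)))^2)
      \<le> C * ((\<Sum>i=1..k. (cmod (x i))^2) + (\<Sum>j=1..n. (cmod (x (n + 1 + k - j)))^2))"
  shows "cmod z ^ (2 * k) \<le> C"
proof -
  define N where "N = (\<Sum>i=1..n. (cmod (x i))^2)"
  have "1 \<le> n"
    using root by (cases n) auto
  then have "(cmod (x 1))^2 \<le> N"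
    unfolding N_def by (intro member_le_sum) auto
  then have N_pos: "0 < N"
    unfolding x_def companion_eigvec_1 by simp
  have "(\<Sum>j=1..n. (cmod (x (n + 1 - j)))^2) = N"
    unfolding N_def by (rule sum.reindex_bij_witness[of _ "\<lambda>i. n + 1 - i" "\<lambda>i. n + 1 - i"]) auto
  then have "(cmod z ^ k)^2 * N = (\<Sum>j=1..n. (cmod (z ^ k * x (n + 1 - j)))^2)"
    by (simp add: norm_mult norm_power power_mult_distrib flip: sum_distrib_left)
  also have "\<dots> = (\<Sum>j=1..n. (cmod ((\<Sum>i=1..k. x i * rowcoef n a (k + 1 - i) j) + x (n + 1 + k - j)))^2)"
    unfolding x_def by (intro sum.cong refl) (subst companion_eigvec_pow_coord[OF root]; auto)
  also have "\<dots> \<le> C * N"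
    using bound unfolding N_def x_def companion_eigvec_norm_split[OF root, of k] .
  finally show ?thesis using N_pos by (simp add: power_mult mult.commute)
qed

lemma delta_nonneg: "0 \<le> delta n a"
  unfolding delta_def by (intro lam_nonneg sum_nonneg) auto

lemma delta'_nonneg: "0 \<le> delta' n a"
  unfolding delta'_def by (intro lam_nonneg sum_nonneg) auto

lemma delta1_nonneg: "0 \<le> delta1 n a"
  unfolding delta1_def by (intro lam_nonneg sum_nonneg) auto

lemma delta2_nonneg: "0 \<le> delta2 n a"
  unfolding delta2_def Let_def by (intro lam_nonneg) auto

lemma cmod_root_pow4_le:
  assumes root: "z ^ n + (\<Sum>j=1..n. a j * z ^ (j - 1)) = 0"
  shows "cmod z ^ 4 \<le> lam (delta n a) 1 (delta' n a)"
proof -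
  define x where "x = companion_eigvec n a z"
  define f where "f j = (\<Sum>i=1..2. x i * rowcoef n a (2 + 1 - i) j)" for j
  define g where "g j = x (n + 1 + 2 - j)" for j
  define P where "P = (\<Sum>i=1..2. (cmod (x i))^2)"
  have f_eq: "f j = x 1 * bco n a j + (- x 2) * a j" if "j \<in> {1..n}" for j
    using that rowcoef_1[of j n a] unfolding f_def sum_atLeastAtMost_1_2 by (simp add: bco_def)
  have P_eq: "P = (cmod (x 1))^2 + (cmod (- x 2))^2"
    unfolding P_def sum_atLeastAtMost_1_2 by simp
  then have P_nonneg: "0 \<le> P" by simp
  have f_bound: "(\<Sum>j\<in>S. (cmod (f j))^2) \<le>
      lam (\<Sum>j\<in>S. (cmod (a j))^2) (\<Sum>j\<in>S. (cmod (bco n a j))^2) ((cmod (\<Sum>j\<in>S. cnj (a j) * bco n a j))^2) * P"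
    if "S \<subseteq> {1..n}" for S
  proof -
    have "(\<Sum>j\<in>S. (cmod (f j))^2) = (\<Sum>j\<in>S. (cmod (x 1 * bco n a j + (- x 2) * a j))^2)"
      using that by (intro sum.cong) (auto simp: f_eq)
    also have "\<dots> \<le> lam (\<Sum>j\<in>S. (cmod (bco n a j))^2) (\<Sum>j\<in>S. (cmod (a j))^2)
        ((cmod (\<Sum>j\<in>S. bco n a j * cnj (a j)))^2) * P"
      unfolding P_eq by (rule sum_cmod_sq_lincomb_le_lam)
    finally show ?thesis by (simp add: lam_commute mult.commute)
  qed
  text \<open>\<open>g\<close> vanishes at \<open>j = 1, 2\<close>, so the cross term only sees \<open>j \<ge> 3\<close>:
    this is where \<open>\<delta>'\<close> enters.\<close>
  have g_eq_0: "g j = 0" if "j \<in> {1..n} - {3..n}" for j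
    using that companion_eigvec_eq_0[OF root] by (auto simp: g_def x_def)
  have "cmod (\<Sum>j=1..n. f j * cnj (g j)) = cmod (\<Sum>j=3..n. f j * cnj (g j))"
    using g_eq_0 by (subst sum.mono_neutral_right[of "{1..n}" "{3..n}"]) auto
  also have "\<dots> \<le> sqrt (\<Sum>j=3..n. (cmod (f j))^2) * sqrt (\<Sum>j=3..n. (cmod (g j))^2)"
    by (rule cmod_sum_mult_cnj_le)
  also have "\<dots> \<le> sqrt (delta' n a * P) * sqrt (\<Sum>j=1..n. (cmod (g j))^2)"
    using f_bound[of "{3..n}"] g_eq_0 delta'_nonneg P_nonneg
    by (intro mult_mono real_sqrt_le_mono sum_mono2) (auto simp: delta'_def intro: sum_nonneg)
  finally have "(\<Sum>j=1..n. (cmod (f j + g j))^2) \<le> lam (delta n a) 1 (delta' n a) * (P + (\<Sum>j=1..n. (cmod (g j))^2))"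
    using f_bound[of "{1..n}"] delta'_nonneg P_nonneg
    by (intro sum_cmod_sq_add_le_lam) (auto simp: delta_def real_sqrt_mult mult.commute intro: sum_nonneg)
  then have "cmod z ^ (2 * 2) \<le> lam (delta n a) 1 (delta' n a)"
    unfolding f_def g_def P_def x_def by (rule cmod_root_pow_le[OF root])
  then show ?thesis by simp
qed

lemma sum_cmod_sq_companion_rows_le_lam:
  fixes x1 x2 x3 x4 :: complex
  shows "(\<Sum>j=1..n. (cmod ((x1 * dco n a j + x2 * cco n a j) + (x3 * bco n a j + (- x4) * a j)))^2)
     \<le> lam (delta1 n a) (delta n a) (delta2 n a) * (((cmod x1)^2 + (cmod x2)^2) + ((cmod x3)^2 + (cmod (- x4))^2))"
proof (rule sum_cmod_sq_add_le_lam)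
  show "(\<Sum>j=1..n. (cmod (x1 * dco n a j + x2 * cco n a j))^2) \<le> delta1 n a * ((cmod x1)^2 + (cmod x2)^2)"
    unfolding delta1_def by (rule sum_cmod_sq_lincomb_le_lam)
  show "(\<Sum>j=1..n. (cmod (x3 * bco n a j + (- x4) * a j))^2) \<le> delta n a * ((cmod x3)^2 + (cmod (- x4))^2)"
    using sum_cmod_sq_lincomb_le_lam[of x3 "bco n a" "- x4" a "{1..n}"]
    unfolding delta_def by (simp add: lam_commute)
  define \<gamma>2 where "\<gamma>2 = (\<Sum>j=1..n. dco n a j * cnj (bco n a j))"
  define \<gamma>3 where "\<gamma>3 = (\<Sum>j=1..n. dco n a j * cnj (a j))"
  define \<gamma>4 where "\<gamma>4 = (\<Sum>j=1..n. cco n a j * cnj (bco n a j))"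
  define \<gamma>5 where "\<gamma>5 = (\<Sum>j=1..n. cco n a j * cnj (a j))"
  define u where "u = x1 * \<gamma>2 + x2 * \<gamma>4"
  define v where "v = x1 * \<gamma>3 + x2 * \<gamma>5"
  have "(\<Sum>j=1..n. (x1 * dco n a j + x2 * cco n a j) * cnj (x3 * bco n a j + (- x4) * a j))
      = u * cnj x3 + v * cnj (- x4)"
  proof -
    have "(x1 * dco n a j + x2 * cco n a j) * cnj (x3 * bco n a j + (- x4) * a j) =
        cnj x3 * x1 * (dco n a j * cnj (bco n a j)) + cnj x3 * x2 * (cco n a j * cnj (bco n a j))
      + (cnj (- x4) * x1 * (dco n a j * cnj (a j)) + cnj (- x4) * x2 * (cco n a j * cnj (a j)))" for j
      by (simp add: algebra_simps)
    then have "(\<Sum>j=1..n. (x1 * dco n a j + x2 * cco n a j) * cnj (x3 * bco n a j + (- x4) * a j))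
        = cnj x3 * x1 * \<gamma>2 + cnj x3 * x2 * \<gamma>4 + (cnj (- x4) * x1 * \<gamma>3 + cnj (- x4) * x2 * \<gamma>5)"
      unfolding \<gamma>2_def \<gamma>3_def \<gamma>4_def \<gamma>5_def by (simp only: sum.distrib sum_distrib_left)
    then show ?thesis by (simp add: u_def v_def algebra_simps)
  qed
  also have "cmod \<dots> \<le> sqrt ((cmod u)^2 + (cmod v)^2) * sqrt ((cmod x3)^2 + (cmod (- x4))^2)"
    using cmod_sum_mult_cnj_le[of "\<lambda>i. if i = 0 then u else v" "\<lambda>i. if i = 0 then x3 else - x4" "{0, 1::nat}"]
    by simp
  also have "(cmod u)^2 + (cmod v)^2 \<le> delta2 n a * ((cmod x1)^2 + (cmod x2)^2)"
    using sum_cmod_sq_lincomb_le_lam[of x1 "\<lambda>i. if i = 0 then \<gamma>2 else \<gamma>3" x2 "\<lambda>i. if i = 0 then \<gamma>4 else \<gamma>5" "{0, 1::nat}"]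
    unfolding u_def v_def delta2_def Let_def \<gamma>2_def \<gamma>3_def \<gamma>4_def \<gamma>5_def by simp
  finally show "cmod (\<Sum>j=1..n. (x1 * dco n a j + x2 * cco n a j) * cnj (x3 * bco n a j + (- x4) * a j))
      \<le> sqrt (delta2 n a) * sqrt ((cmod x1)^2 + (cmod x2)^2) * sqrt ((cmod x3)^2 + (cmod (- x4))^2)"
    by (simp add: real_sqrt_mult mult_right_mono)
qed (simp_all add: delta2_nonneg)

lemma cmod_root_pow8_le:
  assumes root: "z ^ n + (\<Sum>j=1..n. a j * z ^ (j - 1)) = 0"
  shows "cmod z ^ 8 \<le> lam (delta1 n a) (delta n a) (delta2 n a) + 1"
proof -
  define G where "G = lam (delta1 n a) (delta n a) (delta2 n a)"
  define x where "x = companion_eigvec n a z"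
  define f where "f j = (\<Sum>i=1..4. x i * rowcoef n a (4 + 1 - i) j)" for j
  define g where "g j = x (n + 1 + 4 - j)" for j
  define P where "P = (\<Sum>i=1..4. (cmod (x i))^2)"
  have G_nonneg: "0 \<le> G"
    unfolding G_def using delta1_nonneg delta_nonneg delta2_nonneg by (rule lam_nonneg)
  have P_eq: "P = ((cmod (x 1))^2 + (cmod (x 2))^2) + ((cmod (x 3))^2 + (cmod (- x 4))^2)"
    unfolding P_def sum_atLeastAtMost_1_4 by (simp add: add_ac)
  have f_eq: "f j = (x 1 * dco n a j + x 2 * cco n a j) + (x 3 * bco n a j + (- x 4) * a j)"
    if "j \<in> {1..n}" for j
    using that rowcoef_1[of j n a] unfolding f_def sum_atLeastAtMost_1_4
    by (simp add: bco_def cco_def dco_def)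
  have P_nonneg: "0 \<le> P" unfolding P_eq by simp
  have "(\<Sum>j=1..n. (cmod (f j))^2)
      = (\<Sum>j=1..n. (cmod ((x 1 * dco n a j + x 2 * cco n a j) + (x 3 * bco n a j + (- x 4) * a j)))^2)"
    by (intro sum.cong refl) (simp add: f_eq)
  also have "\<dots> \<le> G * P"
    unfolding G_def P_eq by (rule sum_cmod_sq_companion_rows_le_lam)
  finally have f_bound: "(\<Sum>j=1..n. (cmod (f j))^2) \<le> G * P" .
  have "cmod (\<Sum>j=1..n. f j * cnj (g j)) \<le> sqrt (\<Sum>j=1..n. (cmod (f j))^2) * sqrt (\<Sum>j=1..n. (cmod (g j))^2)"
    by (rule cmod_sum_mult_cnj_le)
  also have "\<dots> \<le> sqrt (G * P) * sqrt (\<Sum>j=1..n. (cmod (g j))^2)"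
    using f_bound by (intro mult_right_mono real_sqrt_le_mono) (auto intro: sum_nonneg)
  finally have cross: "cmod (\<Sum>j=1..n. f j * cnj (g j)) \<le> sqrt G * sqrt P * sqrt (\<Sum>j=1..n. (cmod (g j))^2)"
    by (simp add: real_sqrt_mult)
  have "(\<Sum>j=1..n. (cmod (f j + g j))^2) \<le> lam G 1 G * (P + (\<Sum>j=1..n. (cmod (g j))^2))"
    by (rule sum_cmod_sq_add_le_lam[OF f_bound _ cross]) (simp_all add: P_nonneg G_nonneg sum_nonneg)
  then have "cmod z ^ (2 * 4) \<le> lam G 1 G"
    unfolding f_def g_def P_def x_def by (rule cmod_root_pow_le[OF root])
  then show ?thesis using G_nonneg by (simp add: G_def lam_self_one)
qed

lemma le_powr_inverse_if_power_le:
  fixes r c :: real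
  assumes "0 \<le> r" "0 < m" "r ^ m \<le> c"
  shows "r \<le> c powr (1 / real m)"
proof -
  have "r = (r ^ m) powr (1 / real m)"
  proof (cases "r = 0")
    case False
    then have "(r ^ m) powr (1 / real m) = r powr (real m * (1 / real m))"
      using assms(1) by (simp add: powr_powr flip: powr_realpow)
    then show ?thesis using assms(1,2) by simp
  qed (use assms(2) in simp)
  also have "\<dots> \<le> c powr (1 / real m)"
    using assms by (intro powr_mono2) auto
  finally show ?thesis .
qed

theorem mainTheorem13:
  fixes n :: nat and a :: "nat \<Rightarrow> complex" and z :: complex
  assumes "n \<ge> 2" and "a 1 \<noteq> 0"
    and "z ^ n + (\<Sum>j=1..n. a j * z ^ (j - 1)) = 0"
  shows "cmod z \<le>
    ((1/4) * ((delta n a + 1 + sqrt ((delta n a - 1)^2 + 4 * delta' n a)) / 2)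
     + (3/4) * ((1/2) * (delta1 n a + delta n a
                 + sqrt ((delta1 n a - delta n a)^2 + 4 * delta2 n a)) + 1) powr (1/2))
    powr (1/4)"
proof -
  define X where "X = (delta n a + 1 + sqrt ((delta n a - 1)^2 + 4 * delta' n a)) / 2"
  define Y where "Y = (1/2) * (delta1 n a + delta n a + sqrt ((delta1 n a - delta n a)^2 + 4 * delta2 n a)) + 1"
  have "cmod z ^ 4 \<le> X"
    using cmod_root_pow4_le[OF assms(3)] by (simp add: X_def lam_def)
  moreover have "(cmod z ^ 4) ^ 2 \<le> Y"
    using cmod_root_pow8_le[OF assms(3)] by (simp add: Y_def lam_def flip: power_mult)
  then have "cmod z ^ 4 \<le> Y powr (1/2)"
    using le_powr_inverse_if_power_le[of "cmod z ^ 4" 2 Y] by simp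
  ultimately have "cmod z ^ 4 \<le> (1/4) * X + (3/4) * Y powr (1/2)"
    by linarith
  then show ?thesis
    unfolding X_def Y_def using le_powr_inverse_if_power_le[of "cmod z" 4] by simp
qed

end
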